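(* For every $n \ge 1$, every extremal point $\rho$ of $\Gamma(n)$ satisfies $\mathrm{rank}(\rho) \le \sqrt{2n^2 - 1}$. Equivalently, $MR(n) \le \sqrt{2n^2-1}$.
   Context: A state $\rho$ on $M_n(\mathbb{C}) \otimes M_n(\mathbb{C})$ is a marginal tracial state if $\rho(A\otimes I) = \mathrm{tr}(A)$ and $\rho(I \otimes B) = \mathrm{tr}(B)$ for all $A,B \in M_n(\mathbb{C})$, where $\mathrm{tr}$ is the normalized trace. $\Gamma(n)$ is the convex set of all marginal tracial states on $M_n(\mathbb{C}) \otimes M_n(\mathbb{C})$. For a state $\rho$, $\mathrm{rank}(\rho)$ is the rank of its density matrix. $MR(n)$ denotes the maximum of $\mathrm{rank}(\rho)$ over all extremal points $\rho$ of $\Gamma(n)$. *)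

theory Defs
  imports "HOL-Analysis.Analysis"
begin

definition kron :: "complex^'n^'n \<Rightarrow> complex^'n^'n \<Rightarrow> complex^('n \<times> 'n)^('n \<times> 'n)" where
  "kron A B = (\<chi> p. \<chi> q. A $ fst p $ fst q * B $ snd p $ snd q)"

definition psd :: "complex^'k^'k \<Rightarrow> bool" where
  "psd D \<longleftrightarrow> (\<forall>x :: complex^'k.
      Im (\<Sum>i\<in>UNIV. cnj (x $ i) * (D *v x) $ i) = 0 \<and>
      0 \<le> Re (\<Sum>i\<in>UNIV. cnj (x $ i) * (D *v x) $ i))"

text \<open>Density matrix of a state: positive semidefinite with trace one.
  The state associated with D is X \<mapsto> trace (D ** X).\<close>
definition density :: "complex^'k^'k \<Rightarrow> bool" where
  "density D \<longleftrightarrow> psd D \<and> trace D = 1"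

definition ntr :: "complex^('n::finite)^'n \<Rightarrow> complex" where
  "ntr A = trace A / of_nat CARD('n)"

text \<open>Gamma(n), represented via density matrices: marginal tracial states on M_n \<otimes> M_n.\<close>
definition Gamma :: "(complex^('n::finite \<times> 'n)^('n \<times> 'n)) set" where
  "Gamma = {D. density D \<and>
     (\<forall>A :: complex^'n^'n. trace (D ** kron A (mat 1)) = ntr A) \<and>
     (\<forall>B :: complex^'n^'n. trace (D ** kron (mat 1) B) = ntr B)}"

end

theory Submission
  imports Defs
begin

(*
  Let D be the density matrix of rho and r = rank D.  For every matrix K the
  "compression" D K D is supported on the range of D, so D + t (D K D) stays positive
  semidefinite for all sufficiently small real t, provided D K D is Hermitian.  If moreover
  both partial traces of D K D vanish, all constraints defining Gamma(n) are preserved, so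
  D would be the midpoint of two distinct points of Gamma(n) unless D K D = 0.  Hence an
  extreme D admits no nonzero Hermitian compression with vanishing partial traces.
  Conversely, the compressions D K D with K supported on an r x r block of independent rows
  form an r^2-dimensional complex space, while the pair of partial traces lives in a space of
  dimension 2n^2 - 1 (both partial traces have the same trace).  If r^2 >= 2n^2 a nonzero
  compression with vanishing partial traces exists, and its Hermitian or anti-Hermitian part
  gives a contradiction.
*)


definition sesq :: "complex^'k^'k \<Rightarrow> complex^'k \<Rightarrow> complex^'k \<Rightarrow> complex" where
  "sesq M y x = (\<Sum>i\<in>UNIV. cnj (y $ i) * (M *v x) $ i)"

lemma sesq_expand: "sesq M y x = (\<Sum>i\<in>UNIV. \<Sum>j\<in>UNIV. cnj (y$i) * M$i$j * x$j)"
  unfolding sesq_def matrix_vector_mult_def by (simp add: sum_distrib_left mult.assoc)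

lemma psd_iff_sesq: "psd D \<longleftrightarrow> (\<forall>x. Im (sesq D x x) = 0 \<and> 0 \<le> Re (sesq D x x))"
  unfolding psd_def sesq_def by simp

lemma sesq_add_left: "sesq M (y + z) x = sesq M y x + sesq M z x"
  unfolding sesq_def by (simp add: distrib_right sum.distrib)

lemma sesq_add_right: "sesq M y (x + z) = sesq M y x + sesq M y z"
  unfolding sesq_def by (simp add: matrix_vector_right_distrib distrib_left sum.distrib)

lemma sesq_scale_left: "sesq M (c *s y) x = cnj c * sesq M y x"
  unfolding sesq_def by (simp add: sum_distrib_left mult.assoc)

lemma sesq_scale_right: "sesq M y (c *s x) = c * sesq M y x"
  unfolding sesq_expand by (simp add: sum_distrib_left algebra_simps)

lemma sesq_matrix_perturb: "sesq (D + t *\<^sub>R H) y x = sesq D y x + t *\<^sub>R sesq H y x"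
  unfolding sesq_expand by (simp add: distrib_left distrib_right sum.distrib scale_sum_right)

lemma sesq_axis: "sesq M (axis i a) (axis j b) = cnj a * M$i$j * b"
  unfolding sesq_def matrix_vector_mult_def axis_def
  by (simp add: if_distrib if_distribR cong: if_cong)


(* Hermitian matrices; positive semidefinite matrices are Hermitian (polarisation). *)
definition hermitian :: "complex^'k^'k \<Rightarrow> bool" where
  "hermitian D \<longleftrightarrow> (\<forall>i j. D$i$j = cnj (D$j$i))"

lemma hermitian_cnj: "hermitian D \<Longrightarrow> cnj (D$i$j) = D$j$i"
  unfolding hermitian_def by metis

lemma psd_hermitian:
  assumes "psd D"
  shows "hermitian D"
  unfolding hermitian_def
proof (intro allI)
  fix i j
  have real: "Im (sesq D x x) = 0" for x using assms psd_iff_sesq by blast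
  have polar: "sesq D (axis i 1 + axis j c) (axis i 1 + axis j c)
      = D$i$i + D$i$j * c + cnj c * D$j$i + cnj c * D$j$j * c" for c
    by (simp add: sesq_add_left sesq_add_right sesq_axis)
  have ii: "Im (D$i$i) = 0" and jj: "Im (D$j$j) = 0"
    using real[of "axis i 1"] real[of "axis j 1"] by (simp_all add: sesq_axis)
  have "Im (D$i$j) + Im (D$j$i) = 0"
    using real[of "axis i 1 + axis j 1"] polar[of 1] ii jj by simp
  moreover have "Re (D$i$j) - Re (D$j$i) = 0"
    using real[of "axis i 1 + axis j \<i>"] polar[of \<i>] ii jj by simp
  ultimately show "D$i$j = cnj (D$j$i)" by (simp add: complex_eq_iff)
qed

lemma sesq_hermitian_swap:
  assumes "hermitian D"
  shows "sesq D x y = cnj (sesq D y x)"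
proof -
  have "cnj (sesq D y x) = (\<Sum>i\<in>UNIV. \<Sum>j\<in>UNIV. y$i * D$j$i * cnj (x$j))"
    unfolding sesq_expand using hermitian_cnj[OF assms] by (simp add: mult.assoc)
  also have "\<dots> = (\<Sum>j\<in>UNIV. \<Sum>i\<in>UNIV. y$i * D$j$i * cnj (x$j))" by (rule sum.swap)
  also have "\<dots> = sesq D x y" unfolding sesq_expand by (simp add: mult_ac)
  finally show ?thesis by simp
qed

lemma sesq_hermitian_real: "hermitian H \<Longrightarrow> Im (sesq H x x) = 0"
  using sesq_hermitian_swap[of H x x] by (metis cnj.sel(2) complex_eq_iff neg_equal_zero)

lemma sesq_hermitian_move:
  assumes "hermitian D"
  shows "sesq D x z = (\<Sum>j\<in>UNIV. cnj ((D *v x)$j) * z$j)"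
proof -
  have "(\<Sum>j\<in>UNIV. cnj ((D *v x)$j) * z$j) = (\<Sum>j\<in>UNIV. \<Sum>i\<in>UNIV. cnj (x$i) * D$i$j * z$j)"
    using hermitian_cnj[OF assms] unfolding matrix_vector_mult_def
    by (simp add: sum_distrib_right sum_distrib_left mult.commute mult.left_commute)
  also have "\<dots> = sesq D x z" unfolding sesq_expand by (rule sum.swap)
  finally show ?thesis by simp
qed

lemma sesq_compression:
  assumes "hermitian D"
  shows "sesq (D ** K ** D) x x = sesq K (D *v x) (D *v x)"
proof -
  have "(D ** K ** D) *v x = D *v (K *v (D *v x))"
    by (simp add: matrix_vector_mul_assoc matrix_mul_assoc)
  then have "sesq (D ** K ** D) x x = sesq D x (K *v (D *v x))" unfolding sesq_def by simp
  also have "\<dots> = sesq K (D *v x) (D *v x)" unfolding sesq_hermitian_move[OF assms] by (simp only: sesq_def)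
  finally show ?thesis .
qed


(* A real quadratic t |-> a - 2 t b + t^2 b c that is everywhere nonnegative satisfies
   b <= a c: the discriminant inequality behind Cauchy-Schwarz. *)
lemma quadratic_nonneg_bound:
  fixes a b c :: real
  assumes nonneg: "\<And>t. 0 \<le> a - 2*t*b + t^2*b*c" and "0 \<le> b" "0 \<le> c"
  shows "b \<le> a*c"
proof (cases "c = 0")
  case True
  have "0 \<le> a - 2 * ((\<bar>a\<bar> + 1) / (2 * b)) * b" if "b > 0"
    using nonneg[of "(\<bar>a\<bar> + 1) / (2 * b)"] True by simp
  then show ?thesis using True \<open>0 \<le> b\<close> by (cases "b > 0") auto
next
  case False
  have "0 \<le> a - 2 * (1/c) * b + (1/c)^2 * b * c" by (rule nonneg)
  then show ?thesis using False \<open>0 \<le> c\<close> by (simp add: power2_eq_square field_simps)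
qed

lemma psd_cauchy_schwarz:
  assumes psd: "psd D"
  shows "(cmod (sesq D y x))^2 \<le> Re (sesq D y y) * Re (sesq D x x)"
proof -
  define \<beta> where "\<beta> = sesq D y x"
  define b where "b = (cmod \<beta>)^2"
  have herm: "hermitian D" using psd by (rule psd_hermitian)
  have xx: "sesq D x x = of_real (Re (sesq D x x))"
    using psd unfolding psd_iff_sesq by (simp add: complex_eq_iff)
  have "0 \<le> Re (sesq D y y) - 2*t*b + t^2*b*Re (sesq D x x)" for t
  proof -
    define s where "s = - (of_real t * cnj \<beta>)"
    have \<beta>\<beta>: "\<beta> * cnj \<beta> = of_real b" unfolding b_def by (rule complex_norm_square[symmetric])
    have s\<beta>: "s * \<beta> = of_real (- t * b)"
      unfolding s_def using \<beta>\<beta> by (simp add: mult_ac)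
    have ss: "cnj s * s = of_real (t^2 * b)"
      unfolding s_def using \<beta>\<beta> by (simp add: power2_eq_square mult_ac)
    have "sesq D (y + s *s x) (y + s *s x)
        = sesq D y y + sesq D y (s *s x) + sesq D (s *s x) y + sesq D (s *s x) (s *s x)"
      by (simp only: sesq_add_left sesq_add_right add_ac)
    also have "\<dots> = sesq D y y + s * \<beta> + cnj (s * \<beta>) + (cnj s * s) * sesq D x x"
      unfolding sesq_scale_left sesq_scale_right \<beta>_def sesq_hermitian_swap[OF herm, of x y]
      by (simp only: complex_cnj_mult mult.assoc mult.left_commute[of s])
    finally have "Re (sesq D (y + s *s x) (y + s *s x))
        = Re (sesq D y y) - 2*t*b + t^2*b*Re (sesq D x x)"
      by (subst (asm) xx) (simp add: s\<beta> ss)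
    moreover have "0 \<le> Re (sesq D (y + s *s x) (y + s *s x))" using psd psd_iff_sesq by blast
    ultimately show ?thesis by simp
  qed
  moreover have "0 \<le> Re (sesq D x x)" using psd psd_iff_sesq by blast
  ultimately have "b \<le> Re (sesq D y y) * Re (sesq D x x)"
    by (intro quadratic_nonneg_bound) (simp_all add: b_def)
  then show ?thesis by (simp add: b_def \<beta>_def)
qed


definition entry_norm :: "complex^'k^'k \<Rightarrow> real" where
  "entry_norm K = (\<Sum>i\<in>UNIV. \<Sum>j\<in>UNIV. cmod (K$i$j))"

lemma entry_norm_nonneg: "0 \<le> entry_norm K"
  unfolding entry_norm_def by (intro sum_nonneg) simp

lemma sesq_bound: "cmod (sesq K y y) \<le> entry_norm K * (norm y)^2"
proof -
  have "cmod (sesq K y y) \<le> (\<Sum>i\<in>UNIV. \<Sum>j\<in>UNIV. cmod (cnj (y$i) * K$i$j * y$j))"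
    unfolding sesq_expand by (rule order_trans[OF norm_sum sum_mono[OF norm_sum]])
  also have "\<dots> \<le> (\<Sum>i\<in>UNIV. \<Sum>j\<in>UNIV. cmod (K$i$j) * (norm y)^2)"
  proof (intro sum_mono)
    fix i j
    have "cmod (y$i) * cmod (y$j) \<le> norm y * norm y"
      by (intro mult_mono Finite_Cartesian_Product.norm_nth_le) simp_all
    then have "cmod (K$i$j) * (cmod (y$i) * cmod (y$j)) \<le> cmod (K$i$j) * (norm y)^2"
      by (simp add: mult_left_mono power2_eq_square)
    then show "cmod (cnj (y$i) * K$i$j * y$j) \<le> cmod (K$i$j) * (norm y)^2"
      by (simp add: norm_mult mult_ac)
  qed
  also have "\<dots> = entry_norm K * (norm y)^2" unfolding entry_norm_def by (simp add: sum_distrib_right)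
  finally show ?thesis .
qed

lemma psd_image_bound:
  assumes psd: "psd D"
  shows "(norm (D *v x))^2 \<le> entry_norm D * Re (sesq D x x)"
proof -
  define N where "N = (norm (D *v x))^2"
  have form: "sesq D (D *v x) x = of_real N"
  proof -
    have "sesq D (D *v x) x = (\<Sum>i\<in>UNIV. of_real ((cmod ((D *v x)$i))^2))"
      unfolding sesq_def by (intro sum.cong refl) (metis complex_norm_square mult.commute of_real_power)
    also have "\<dots> = of_real N"
      unfolding N_def norm_vec_def L2_set_def by (simp add: sum_nonneg)
    finally show ?thesis .
  qed
  have R0: "0 \<le> Re (sesq D x x)" using psd psd_iff_sesq by blast
  have N0: "0 \<le> N" by (simp add: N_def)
  have "cmod (sesq D (D *v x) x) = N" unfolding form using N0 by simp
  then have "N * N \<le> Re (sesq D (D *v x) (D *v x)) * Re (sesq D x x)"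
    using psd_cauchy_schwarz[OF psd, of "D *v x" x] by (simp add: power2_eq_square)
  also have "\<dots> \<le> (entry_norm D * N) * Re (sesq D x x)"
    using sesq_bound[of D "D *v x"] complex_Re_le_cmod[of "sesq D (D *v x) (D *v x)"] R0
    unfolding N_def by (intro mult_right_mono) linarith+
  finally have "N * N \<le> N * (entry_norm D * Re (sesq D x x))" by (simp add: mult_ac)
  then show ?thesis
    using N0 R0 entry_norm_nonneg[of D] unfolding N_def[symmetric]
    by (cases "N = 0") (simp_all add: mult_le_cancel_left_pos)
qed

lemma psd_perturb_compression:
  assumes psd: "psd D" and herm: "hermitian (D ** K ** D)"
  shows "\<exists>e>0. \<forall>t. \<bar>t\<bar> \<le> e \<longrightarrow> psd (D + t *\<^sub>R (D ** K ** D))"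
proof (intro exI conjI allI impI)
  define C where "C = entry_norm K * entry_norm D"
  have C0: "0 \<le> C" unfolding C_def by (simp add: entry_norm_nonneg)
  show "0 < 1 / (C + 1)" using C0 by simp
  fix t :: real
  assume t: "\<bar>t\<bar> \<le> 1 / (C + 1)"
  have "\<bar>t\<bar> * C \<le> C / (C + 1)" using mult_right_mono[OF t C0] by simp
  also have "\<dots> \<le> 1" using C0 by simp
  finally have tC: "\<bar>t\<bar> * C \<le> 1" .
  show "psd (D + t *\<^sub>R (D ** K ** D))"
    unfolding psd_iff_sesq sesq_matrix_perturb
  proof (intro allI conjI)
    fix x
    define R where "R = Re (sesq D x x)"
    define u where "u = Re (sesq (D ** K ** D) x x)"
    have R0: "0 \<le> R" using psd psd_iff_sesq unfolding R_def by blast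
    have "\<bar>u\<bar> \<le> cmod (sesq K (D *v x) (D *v x))"
      unfolding u_def sesq_compression[OF psd_hermitian[OF psd]] by (rule abs_Re_le_cmod)
    also have "\<dots> \<le> entry_norm K * (norm (D *v x))^2" by (rule sesq_bound)
    also have "\<dots> \<le> C * R"
      using mult_left_mono[OF psd_image_bound[OF psd] entry_norm_nonneg[of K]]
      unfolding C_def R_def by (simp add: mult.assoc)
    finally have "\<bar>t\<bar> * \<bar>u\<bar> \<le> \<bar>t\<bar> * C * R" by (simp add: mult_left_mono mult.assoc)
    also have "\<dots> \<le> R" using mult_right_mono[OF tC R0] by simp
    finally have "\<bar>t * u\<bar> \<le> R" by (simp add: abs_mult)
    then show "0 \<le> Re (sesq D x x + t *\<^sub>R sesq (D ** K ** D) x x)"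
      unfolding R_def u_def by simp
    show "Im (sesq D x x + t *\<^sub>R sesq (D ** K ** D) x x) = 0"
      using psd sesq_hermitian_real[OF herm] unfolding psd_iff_sesq by simp
  qed
qed


definition ptrace1 :: "complex^('n::finite \<times> 'n)^('n \<times> 'n) \<Rightarrow> complex^'n^'n" where
  "ptrace1 M = (\<chi> i j. \<Sum>k\<in>UNIV. M$(k,i)$(k,j))"

definition ptrace2 :: "complex^('n::finite \<times> 'n)^('n \<times> 'n) \<Rightarrow> complex^'n^'n" where
  "ptrace2 M = (\<chi> i j. \<Sum>k\<in>UNIV. M$(i,k)$(j,k))"

lemma sum_UNIV_pair: "(\<Sum>p\<in>UNIV. g p) = (\<Sum>x\<in>UNIV. \<Sum>y\<in>UNIV. g (x, y))"
  by (simp add: UNIV_Times_UNIV[symmetric] sum.cartesian_product' del: UNIV_Times_UNIV)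

lemma trace_mult_expand: "trace (M ** X) = (\<Sum>p\<in>UNIV. \<Sum>q\<in>UNIV. M$p$q * X$q$p)"
  unfolding trace_def matrix_matrix_mult_def by simp

lemma trace_mult_kron_left:
  fixes M :: "complex^('n::finite \<times> 'n)^('n \<times> 'n)"
  shows "trace (M ** kron A (mat 1)) = trace (ptrace2 M ** A)"
proof -
  have "trace (M ** kron A (mat 1))
      = (\<Sum>p1\<in>UNIV. \<Sum>p2\<in>UNIV. \<Sum>q1\<in>UNIV. M$(p1,p2)$(q1,p2) * A$q1$p1)"
    unfolding trace_mult_expand sum_UNIV_pair kron_def mat_def
    by (simp add: if_distrib if_distribR sum.delta' cong: if_cong)
  also have "\<dots> = (\<Sum>p1\<in>UNIV. \<Sum>q1\<in>UNIV. \<Sum>p2\<in>UNIV. M$(p1,p2)$(q1,p2) * A$q1$p1)"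
    by (intro sum.cong refl sum.swap)
  also have "\<dots> = trace (ptrace2 M ** A)"
    unfolding trace_mult_expand ptrace2_def by (simp add: sum_distrib_right)
  finally show ?thesis .
qed

lemma trace_mult_kron_right:
  fixes M :: "complex^('n::finite \<times> 'n)^('n \<times> 'n)"
  shows "trace (M ** kron (mat 1) B) = trace (ptrace1 M ** B)"
proof -
  have pull_if: "(\<Sum>y\<in>UNIV. if P then f y else 0) = (if P then \<Sum>y\<in>UNIV. f y else 0)"
    for P and f :: "'n \<Rightarrow> complex" by simp
  have "trace (M ** kron (mat 1) B)
      = (\<Sum>p1\<in>UNIV. \<Sum>p2\<in>UNIV. \<Sum>q2\<in>UNIV. M$(p1,p2)$(p1,q2) * B$q2$p2)"
    unfolding trace_mult_expand sum_UNIV_pair kron_def mat_def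
    by (simp add: if_distrib if_distribR pull_if cong: if_cong)
  also have "\<dots> = (\<Sum>p2\<in>UNIV. \<Sum>p1\<in>UNIV. \<Sum>q2\<in>UNIV. M$(p1,p2)$(p1,q2) * B$q2$p2)"
    by (rule sum.swap)
  also have "\<dots> = (\<Sum>p2\<in>UNIV. \<Sum>q2\<in>UNIV. \<Sum>p1\<in>UNIV. M$(p1,p2)$(p1,q2) * B$q2$p2)"
    by (intro sum.cong refl sum.swap)
  also have "\<dots> = trace (ptrace1 M ** B)"
    unfolding trace_mult_expand ptrace1_def by (simp add: sum_distrib_right)
  finally show ?thesis .
qed

lemma trace_ptrace1: "trace (ptrace1 M) = trace M"
  unfolding trace_def ptrace1_def sum_UNIV_pair
  by (simp add: sum.swap[where g = "\<lambda>i k. M$(k,i)$(k,i)"])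

lemma trace_ptrace2: "trace (ptrace2 M) = trace M"
  unfolding trace_def ptrace2_def sum_UNIV_pair by simp

lemma trace_perturb: "trace (D + t *\<^sub>R H) = trace D + t *\<^sub>R trace (H :: complex^'k^'k)"
  unfolding trace_def by (simp add: sum.distrib scale_sum_right)

lemma trace_mult_perturb:
  "trace ((D + t *\<^sub>R H) ** X) = trace (D ** X) + t *\<^sub>R trace (H ** (X :: complex^'k^'k))"
  unfolding trace_mult_expand by (simp add: distrib_right sum.distrib scale_sum_right)

lemma Gamma_perturb:
  fixes D H :: "complex^('n::finite \<times> 'n)^('n \<times> 'n)"
  assumes "D \<in> Gamma" "ptrace1 H = 0" "ptrace2 H = 0" "psd (D + t *\<^sub>R H)"
  shows "D + t *\<^sub>R H \<in> Gamma"
proof -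
  have "trace H = 0" using trace_ptrace1[of H] assms(2) by (simp add: trace_def)
  moreover have "trace (H ** kron A (mat 1)) = 0" for A
    unfolding trace_mult_kron_left assms(3) by (simp add: trace_def)
  moreover have "trace (H ** kron (mat 1) B) = 0" for B
    unfolding trace_mult_kron_right assms(2) by (simp add: trace_def)
  ultimately show ?thesis
    using assms(1,4) unfolding Gamma_def density_def by (simp add: trace_perturb trace_mult_perturb)
qed

(* Extreme points of Gamma(n) admit no nonzero Hermitian compression D K D whose partial
   traces vanish: otherwise D is the midpoint of D + e H and D - e H, both in Gamma(n). *)
lemma extreme_point_no_traceless_compression:
  fixes D K :: "complex^('n::finite \<times> 'n)^('n \<times> 'n)"
  assumes ext: "D extreme_point_of Gamma" and herm: "hermitian (D ** K ** D)"
    and tr: "ptrace1 (D ** K ** D) = 0" "ptrace2 (D ** K ** D) = 0"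
  shows "D ** K ** D = 0"
proof (rule ccontr)
  assume nz: "D ** K ** D \<noteq> 0"
  define H where "H = D ** K ** D"
  have G: "D \<in> Gamma" using ext unfolding extreme_point_of_def by blast
  then have "psd D" unfolding Gamma_def density_def by blast
  then obtain e where e: "e > 0" "\<And>t. \<bar>t\<bar> \<le> e \<Longrightarrow> psd (D + t *\<^sub>R H)"
    using psd_perturb_compression[OF _ herm] unfolding H_def by blast
  have near: "D + t *\<^sub>R H \<in> Gamma" if "\<bar>t\<bar> \<le> e" for t
    using Gamma_perturb[OF G tr[folded H_def] e(2)[OF that]] .
  have in_Gamma: "D + e *\<^sub>R H \<in> Gamma" "D + (- e) *\<^sub>R H \<in> Gamma"
    using near[of e] near[of "- e"] e(1) by auto
  have "D + e *\<^sub>R H \<noteq> D + (- e) *\<^sub>R H"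
    unfolding add_left_cancel scaleR_cancel_right using e(1) nz unfolding H_def by simp
  moreover have "midpoint (D + e *\<^sub>R H) (D + (- e) *\<^sub>R H) = D"
    unfolding midpoint_def by (simp add: scaleR_2[symmetric] algebra_simps)
  ultimately have "D \<in> open_segment (D + e *\<^sub>R H) (D + (- e) *\<^sub>R H)"
    using midpoint_in_open_segment by metis
  then show False using ext in_Gamma unfolding extreme_point_of_def by blast
qed


definition adj :: "complex^'k^'k \<Rightarrow> complex^'k^'k" where
  "adj M = (\<chi> i j. cnj (M$j$i))"

definition cscale :: "complex \<Rightarrow> complex^'k^'k \<Rightarrow> complex^'k^'k" where
  "cscale c M = (\<chi> i j. c * M$i$j)"

lemma compression_entry: "(D ** X ** D)$i$j = (\<Sum>k\<in>UNIV. \<Sum>l\<in>UNIV. D$i$k * X$k$l * D$l$j)"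
proof -
  have "(D ** X ** D)$i$j = (\<Sum>l\<in>UNIV. \<Sum>k\<in>UNIV. D$i$k * X$k$l * D$l$j)"
    unfolding matrix_matrix_mult_def by (simp add: sum_distrib_right)
  also have "\<dots> = (\<Sum>k\<in>UNIV. \<Sum>l\<in>UNIV. D$i$k * X$k$l * D$l$j)" by (rule sum.swap)
  finally show ?thesis .
qed

lemma compression_add: "D ** (A + B) ** D = D ** A ** D + D ** B ** D"
  by (simp add: vec_eq_iff compression_entry distrib_left distrib_right sum.distrib)

lemma compression_cscale: "D ** cscale c K ** D = cscale c (D ** K ** D)"
  unfolding vec_eq_iff compression_entry cscale_def
  by (simp add: sum_distrib_left mult_ac)

lemma compression_adj:
  assumes "hermitian D"
  shows "D ** adj K ** D = adj (D ** K ** D)"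
proof -
  have "adj (D ** K ** D)$a$b = (D ** adj K ** D)$a$b" for a b
  proof -
    have "adj (D ** K ** D)$a$b = (\<Sum>l\<in>UNIV. \<Sum>k\<in>UNIV. D$a$k * cnj (K$l$k) * D$l$b)"
      unfolding adj_def compression_entry using hermitian_cnj[OF assms] by (simp add: mult_ac)
    also have "\<dots> = (\<Sum>k\<in>UNIV. \<Sum>l\<in>UNIV. D$a$k * cnj (K$l$k) * D$l$b)" by (rule sum.swap)
    also have "\<dots> = (D ** adj K ** D)$a$b" unfolding compression_entry adj_def by simp
    finally show ?thesis .
  qed
  then show ?thesis by (simp add: vec_eq_iff)
qed

lemma ptrace_linear:
  "ptrace1 (A + B) = ptrace1 A + ptrace1 B" "ptrace2 (A + B) = ptrace2 A + ptrace2 B"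
  "ptrace1 (adj A) = adj (ptrace1 A)" "ptrace2 (adj A) = adj (ptrace2 A)"
  "ptrace1 (cscale c A) = cscale c (ptrace1 A)" "ptrace2 (cscale c A) = cscale c (ptrace2 A)"
  unfolding ptrace1_def ptrace2_def adj_def cscale_def vec_eq_iff
  by (simp_all add: sum.distrib sum_distrib_left)

(* If M = D K D is nonzero with vanishing partial traces, then either M + M* or i M is a
   nonzero Hermitian compression with the same property. *)
lemma exists_hermitian_compression:
  fixes D K :: "complex^('n::finite \<times> 'n)^('n \<times> 'n)"
  assumes herm: "hermitian D" and nz: "D ** K ** D \<noteq> 0"
    and tr: "ptrace1 (D ** K ** D) = 0" "ptrace2 (D ** K ** D) = 0"
  shows "\<exists>K'. hermitian (D ** K' ** D) \<and> D ** K' ** D \<noteq> 0 \<and>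
              ptrace1 (D ** K' ** D) = 0 \<and> ptrace2 (D ** K' ** D) = 0"
proof -
  define M where "M = D ** K ** D"
  have zero: "adj (0 :: complex^'n^'n) = 0" "cscale c (0 :: complex^'n^'n) = 0" for c
    unfolding adj_def cscale_def vec_eq_iff by simp_all
  show ?thesis
  proof (cases "M + adj M = 0")
    case False
    have "D ** (K + adj K) ** D = M + adj M"
      unfolding compression_add compression_adj[OF herm] M_def ..
    moreover have "hermitian (M + adj M)"
      unfolding hermitian_def adj_def by (simp add: add.commute)
    moreover have "ptrace1 (M + adj M) = 0" "ptrace2 (M + adj M) = 0"
      using tr unfolding M_def by (simp_all add: ptrace_linear zero)
    ultimately show ?thesis using False by metis
  next
    case True
    have skew: "cnj (M$j$i) = - M$i$j" for i j
      using arg_cong[OF True, of "\<lambda>X. X$i$j"] unfolding adj_def by (simp add: add_eq_0_iff)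
    have "D ** cscale \<i> K ** D = cscale \<i> M" unfolding compression_cscale M_def ..
    moreover have "hermitian (cscale \<i> M)"
      unfolding hermitian_def cscale_def by (simp add: skew)
    moreover have "cscale \<i> M \<noteq> 0"
      using nz unfolding M_def cscale_def vec_eq_iff by simp
    moreover have "ptrace1 (cscale \<i> M) = 0" "ptrace2 (cscale \<i> M) = 0"
      using tr unfolding M_def by (simp_all add: ptrace_linear zero)
    ultimately show ?thesis by metis
  qed
qed


(* The two partial traces packed into one vector, and the hyperplane it always lies in:
   both partial traces have the trace of M. *)
definition marginals :: "complex^('n::finite \<times> 'n)^('n \<times> 'n) \<Rightarrow> complex^(('n \<times> 'n) + ('n \<times> 'n))" where
  "marginals M = (\<chi> z. case z of Inl (i, j) \<Rightarrow> ptrace1 M $ i $ j | Inr (i, j) \<Rightarrow> ptrace2 M $ i $ j)"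

definition marginal_space :: "(complex^(('n::finite \<times> 'n) + ('n \<times> 'n))) set" where
  "marginal_space = {v. (\<Sum>a\<in>UNIV. v$Inl (a,a)) = (\<Sum>a\<in>UNIV. v$Inr (a,a))}"

lemma marginals_in_space: "marginals M \<in> marginal_space"
  using trace_ptrace1[of M] trace_ptrace2[of M]
  unfolding marginal_space_def marginals_def trace_def by simp

lemma marginals_zero:
  assumes "marginals M = 0"
  shows "ptrace1 M = 0" "ptrace2 M = 0"
proof -
  have "marginals M $ Inl (i,j) = 0" "marginals M $ Inr (i,j) = 0" for i j
    using assms by simp_all
  then show "ptrace1 M = 0" "ptrace2 M = 0" unfolding marginals_def vec_eq_iff by simp_all
qed

lemma marginals_add: "marginals (A + B) = marginals A + marginals B"
  unfolding marginals_def vec_eq_iff by (auto simp: ptrace_linear split: sum.split)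

lemma marginals_cscale: "marginals (cscale c A) = c *s marginals A"
  unfolding marginals_def vec_eq_iff ptrace1_def ptrace2_def cscale_def
  by (auto simp: sum_distrib_left split: sum.split)

lemma dim_marginal_space:
  "vec.dim (marginal_space :: (complex^(('n::finite \<times> 'n) + ('n \<times> 'n))) set) < 2 * CARD('n)^2"
proof -
  obtain a :: 'n where True by blast
  have subspace: "vec.subspace (marginal_space :: (complex^(('n \<times> 'n) + ('n \<times> 'n))) set)"
    unfolding vec.subspace_def marginal_space_def by (simp add: sum.distrib sum_distrib_left[symmetric])
  have span_eq: "vec.span marginal_space = (marginal_space :: (complex^(('n \<times> 'n) + ('n \<times> 'n))) set)"
    using subspace by simp
  have "axis (Inl (a,a)) 1 \<notin> (marginal_space :: (complex^(('n \<times> 'n) + ('n \<times> 'n))) set)"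
    unfolding marginal_space_def axis_def by (simp add: if_distrib cong: if_cong)
  then have "vec.span marginal_space \<subset> vec.span (UNIV :: (complex^(('n \<times> 'n) + ('n \<times> 'n))) set)"
    unfolding span_eq vec.span_UNIV by blast
  then have "vec.dim (marginal_space :: (complex^(('n \<times> 'n) + ('n \<times> 'n))) set)
      < vec.dim (UNIV :: (complex^(('n \<times> 'n) + ('n \<times> 'n))) set)"
    by (rule vec.dim_psubset)
  moreover have "vec.dim (UNIV :: (complex^(('n \<times> 'n) + ('n \<times> 'n))) set) = 2 * CARD('n)^2"
    unfolding vec_dim_card by (simp add: card_UNIV_sum power2_eq_square)
  ultimately show ?thesis by simp
qed

(* Matrices as vectors indexed by pairs, so that compressions D K D and their marginals
   become a linear map between coordinate spaces. *)
definition mat_of_vec :: "complex^('k \<times> 'k) \<Rightarrow> complex^'k^'k" where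
  "mat_of_vec c = (\<chi> j l. c$(j,l))"

lemma compressed_marginals_linear:
  fixes D :: "complex^('n::finite \<times> 'n)^('n \<times> 'n)"
  shows "Vector_Spaces.linear (*s) (*s) (\<lambda>c. marginals (D ** mat_of_vec c ** D))"
proof -
  have "mat_of_vec (x + y) = mat_of_vec x + mat_of_vec y" "mat_of_vec (a *s x) = cscale a (mat_of_vec x)"
    for x y :: "complex^(('n \<times> 'n) \<times> ('n \<times> 'n))" and a
    unfolding mat_of_vec_def cscale_def vec_eq_iff by simp_all
  then show ?thesis
    unfolding Vector_Spaces.linear_iff
    by (simp add: vec.vector_space_axioms compression_add compression_cscale marginals_add marginals_cscale)
qed

lemma independent_rows:
  fixes D :: "complex^'k^'k"
  obtains J where "card J = rank D"
    "\<And>f. (\<Sum>j\<in>J. f j *s row j D) = 0 \<Longrightarrow> \<forall>j\<in>J. f j = 0"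
proof -
  obtain B where B: "B \<subseteq> rows D" "vec.independent B" "rows D \<subseteq> vec.span B"
    by (rule vec.maximal_independent_subset)
  have card_B: "card B = rank D"
    unfolding row_rank_def_gen by (rule vec.basis_card_eq_dim[OF B(1,3,2)])
  define g where "g u = (SOME i. u = row i D)" for u
  have g: "row (g u) D = u" if "u \<in> B" for u
    using someI_ex[of "\<lambda>i. u = row i D"] that B(1) unfolding g_def rows_def by force
  have inj: "inj_on g B" by (metis g inj_onI)
  have indep_B: "(\<Sum>u\<in>B. h u *s u) = 0 \<Longrightarrow> \<forall>u\<in>B. h u = 0" for h
    using B(2) unfolding vec.independent_explicit by blast
  show ?thesis
  proof (rule that[of "g ` B"])
    show "card (g ` B) = rank D" using card_image[OF inj] card_B by simp
    fix f assume zero: "(\<Sum>j\<in>g ` B. f j *s row j D) = 0"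
    have "(\<Sum>u\<in>B. f (g u) *s u) = (\<Sum>u\<in>B. f (g u) *s row (g u) D)"
      by (intro sum.cong refl) (simp add: g)
    also have "\<dots> = (\<Sum>j\<in>g ` B. f j *s row j D)"
      by (rule sum.reindex[OF inj, symmetric, unfolded comp_def])
    finally have "(\<Sum>u\<in>B. f (g u) *s u) = 0" using zero by simp
    then have "\<forall>u\<in>B. f (g u) = 0" by (rule indep_B)
    then show "\<forall>j\<in>g ` B. f j = 0" by blast
  qed
qed

lemma compression_injective:
  fixes D :: "complex^'k^'k" and c :: "complex^('k \<times> 'k)"
  assumes herm: "hermitian D"
    and indep: "\<And>f. (\<Sum>j\<in>J. f j *s row j D) = 0 \<Longrightarrow> \<forall>j\<in>J. f j = 0"
    and supp: "\<And>p. p \<notin> J \<times> J \<Longrightarrow> c$p = 0"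
    and zero: "D ** mat_of_vec c ** D = 0"
  shows "c = 0"
proof -
  define f where "f a l = (\<Sum>j\<in>J. D$a$j * c$(j,l))" for a l
  have restrict: "(\<Sum>p\<in>UNIV. g p) = (\<Sum>p\<in>J. g p)" if "\<And>p. p \<notin> J \<Longrightarrow> g p = 0" for g :: "'k \<Rightarrow> complex"
    using that by (intro sum.mono_neutral_right) auto
  have "(D ** mat_of_vec c ** D)$a$b = (\<Sum>l\<in>J. f a l * D$l$b)" for a b
  proof -
    have "(D ** mat_of_vec c ** D)$a$b = (\<Sum>j\<in>UNIV. \<Sum>l\<in>UNIV. D$a$j * c$(j,l) * D$l$b)"
      unfolding compression_entry mat_of_vec_def by simp
    also have "\<dots> = (\<Sum>j\<in>UNIV. \<Sum>l\<in>J. D$a$j * c$(j,l) * D$l$b)"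
      by (intro sum.cong refl restrict) (simp add: supp)
    also have "\<dots> = (\<Sum>j\<in>J. \<Sum>l\<in>J. D$a$j * c$(j,l) * D$l$b)"
      by (intro restrict) (simp add: supp)
    also have "\<dots> = (\<Sum>l\<in>J. \<Sum>j\<in>J. D$a$j * c$(j,l) * D$l$b)" by (rule sum.swap)
    also have "\<dots> = (\<Sum>l\<in>J. f a l * D$l$b)" unfolding f_def by (simp add: sum_distrib_right)
    finally show ?thesis .
  qed
  then have "(\<Sum>l\<in>J. f a l *s row l D) = 0" for a
    using zero unfolding vec_eq_iff by (simp add: row_def)
  then have f0: "f a l = 0" if "l \<in> J" for a l using indep[of "\<lambda>l. f a l"] that by blast
  have on_J: "c$(j,l) = 0" if "j \<in> J" "l \<in> J" for j l
  proof -
    have "(\<Sum>j\<in>J. cnj (c$(j,l)) *s row j D) = 0"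
    proof (unfold vec_eq_iff, intro allI)
      fix a
      have "(\<Sum>j\<in>J. cnj (c$(j,l)) *s row j D)$a = cnj (f a l)"
        unfolding f_def by (simp add: row_def hermitian_cnj[OF herm] mult.commute)
      then show "(\<Sum>j\<in>J. cnj (c$(j,l)) *s row j D)$a = 0$a" using f0[OF that(2)] by simp
    qed
    then have "cnj (c$(j,l)) = 0" using indep[of "\<lambda>j. cnj (c$(j,l))"] that(1) by blast
    then show ?thesis by simp
  qed
  show ?thesis
  proof (unfold vec_eq_iff, intro allI)
    fix p :: "'k \<times> 'k"
    show "c$p = 0$p" using on_J supp by (cases p) (metis mem_Sigma_iff zero_index)
  qed
qed

(* Dimension count: if rank(D)^2 >= 2 n^2, the r^2-dimensional space of compressions
   cannot map injectively into the (2n^2-1)-dimensional marginal space. *)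
lemma exists_traceless_compression:
  fixes D :: "complex^('n::finite \<times> 'n)^('n \<times> 'n)"
  assumes herm: "hermitian D" and big: "2 * CARD('n)^2 \<le> rank D ^ 2"
  shows "\<exists>K. D ** K ** D \<noteq> 0 \<and> ptrace1 (D ** K ** D) = 0 \<and> ptrace2 (D ** K ** D) = 0"
proof -
  obtain J where card_J: "card J = rank D"
    and indep: "\<And>f. (\<Sum>j\<in>J. f j *s row j D) = 0 \<Longrightarrow> \<forall>j\<in>J. f j = 0"
    using independent_rows[of D] by blast
  define \<Phi> where "\<Phi> c = marginals (D ** mat_of_vec c ** D)" for c
  define E where "E = (\<lambda>p. axis p (1::complex)) ` (J \<times> J)"
  define W where "W = {c :: complex^(('n \<times> 'n) \<times> ('n \<times> 'n)). \<forall>p. p \<notin> J \<times> J \<longrightarrow> c$p = 0}"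
  have lin: "Vector_Spaces.linear (*s) (*s) \<Phi>"
    unfolding \<Phi>_def by (rule compressed_marginals_linear)
  have indE: "vec.independent E"
    by (rule vec.independent_mono[OF independent_cart_basis]) (auto simp: E_def cart_basis_def)
  have card_E: "card E = rank D ^ 2"
    unfolding E_def using card_J
    by (subst card_image) (auto simp: inj_on_def axis_eq_axis card_cartesian_product power2_eq_square)
  have span_W: "vec.span E \<subseteq> W"
    by (rule vec.span_minimal) (auto simp: E_def W_def axis_def vec.subspace_def)
  have "\<not> inj_on \<Phi> (vec.span E)"
  proof
    assume inj: "inj_on \<Phi> (vec.span E)"
    have "vec.independent (\<Phi> ` E)"
      by (rule vec.linear_independent_injective_image[OF lin indE inj])
    moreover have "\<Phi> ` E \<subseteq> marginal_space" unfolding \<Phi>_def using marginals_in_space by blast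
    ultimately have "card (\<Phi> ` E) \<le> vec.dim (marginal_space :: (complex^(('n \<times> 'n) + ('n \<times> 'n))) set)"
      using vec.independent_card_le_dim by blast
    moreover have "card (\<Phi> ` E) = card E"
      by (rule card_image[OF inj_on_subset[OF inj vec.span_superset]])
    ultimately show False using dim_marginal_space[where 'n='n] card_E big by linarith
  qed
  then obtain x y where xy: "x \<in> vec.span E" "y \<in> vec.span E" "x \<noteq> y" "\<Phi> x = \<Phi> y"
    unfolding inj_on_def by blast
  define c where "c = x - y"
  have "c \<in> W" unfolding c_def using span_W vec.span_diff[OF xy(1,2)] by blast
  then have nz: "D ** mat_of_vec c ** D \<noteq> 0"
    using compression_injective[OF herm indep] xy(3) unfolding W_def c_def by force
  have "marginals (D ** mat_of_vec c ** D) = 0"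
    using xy(4) unfolding c_def \<Phi>_def[symmetric] vec.linear_diff[OF lin] by simp
  then show ?thesis using nz marginals_zero by metis
qed


theorem mainTheorem2:
  fixes \<rho> :: "complex^('n::finite \<times> 'n)^('n \<times> 'n)"
  assumes "\<rho> extreme_point_of (Gamma :: (complex^('n \<times> 'n)^('n \<times> 'n)) set)"
  shows "real (rank \<rho>) \<le> sqrt (2 * real (CARD('n))^2 - 1)"
proof -
  have "\<rho> \<in> Gamma" using assms unfolding extreme_point_of_def by blast
  then have herm: "hermitian \<rho>" unfolding Gamma_def density_def using psd_hermitian by blast
  have "rank \<rho> ^ 2 < 2 * CARD('n)^2"
  proof (rule ccontr)
    assume "\<not> rank \<rho> ^ 2 < 2 * CARD('n)^2"
    then obtain K where "\<rho> ** K ** \<rho> \<noteq> 0" "ptrace1 (\<rho> ** K ** \<rho>) = 0" "ptrace2 (\<rho> ** K ** \<rho>) = 0"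
      using exists_traceless_compression[OF herm] by (meson not_less)
    then obtain K' where "hermitian (\<rho> ** K' ** \<rho>)" "\<rho> ** K' ** \<rho> \<noteq> 0"
      "ptrace1 (\<rho> ** K' ** \<rho>) = 0" "ptrace2 (\<rho> ** K' ** \<rho>) = 0"
      using exists_hermitian_compression[OF herm] by blast
    then show False using extreme_point_no_traceless_compression[OF assms] by blast
  qed
  then have "real (rank \<rho> ^ 2) \<le> real (2 * CARD('n)^2) - 1" by linarith
  then have "(real (rank \<rho>))^2 \<le> 2 * real (CARD('n))^2 - 1" by simp
  then show ?thesis by (rule real_le_rsqrt)
qed

end
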